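(* Let $\mathbf L\in\mathbb R_+^{n\times k}$ be such that all columns of $\mathbf L$ can be obtained from one another by permuting entries, i.e. for all $t_1,t_2\in[k]$ there exists a permutation $\sigma$ of $[n]$ with $\ell_{y,t_2}=\ell_{\sigma(y),t_1}$ for all $y\in[n]$. Then $\mathrm{CCdim}(\mathbf L)\ge\operatorname{affdim}(\mathbf L)-1$.
   Context: Notation: $[m]=\{1,\dots,m\}$; $\Delta_n=\{\mathbf p\in\mathbb R_+^n:\sum_i p_i=1\}$. A loss matrix $\mathbf L\in\mathbb R_+^{n\times k}$ has entries $\ell_{yt}$ and columns $\boldsymbol\ell_t$, $t\in[k]$; $\operatorname{affdim}(\mathbf L)$ is the dimension of the affine hull of $\{\boldsymbol\ell_1,\dots,\boldsymbol\ell_k\}$. Standing assumption: for each $t\in[k]$ there is $\mathbf q\in\Delta_n$ with $\operatorname{argmin}_{t'}\mathbf q^\top\boldsymbol\ell_{t'}=\{t\}$. A surrogate loss $\boldsymbol\psi:\mathcal C\to\mathbb R_+^n$ ($\mathcal C\subseteq\mathbb R^d$ convex) is $\mathbf L$-calibrated if there is $\mathrm{pred}:\mathcal C\to[k]$ such that for all $\mathbf q\in\Delta_n$: $\inf_{\mathbf u\in\mathcal C:\mathrm{pred}(\mathbf u)\notin\operatorname{argmin}_t\mathbf q^\top\boldsymbol\ell_t}\mathbf q^\top\boldsymbol\psi(\mathbf u)>\inf_{\mathbf u\in\mathcal C}\mathbf q^\top\boldsymbol\psi(\mathbf u)$. $\mathrm{CCdim}(\mathbf L)$ is the smallest $d\in\mathbb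 Z_+$ for which there exist a convex set $\mathcal C\subseteq\mathbb R^d$ and a convex (componentwise convex) $\mathbf L$-calibrated surrogate $\boldsymbol\psi:\mathcal C\to\mathbb R_+^n$ ($\infty$ if none exists). *)

theory Defs
  imports "HOL-Analysis.Analysis" "HOL-Library.Extended_Nat"
begin

text \<open>The outcome space [n] is a finite type 'n (n = CARD('n)), so that
  vectors in R^n are elements of real^'n. A loss matrix with k columns is a function
  L :: nat => real^'n, where column t (for t in [k] = {1..k}) is L t, and the entry
  l_{y t} is L t $ y.  Points of R^d (d varies inside CCdim) are represented as
  functions u :: nat => real vanishing outside {..<d}.\<close>

definition prob_simplex :: "(real^'n) set" where
  "prob_simplex = {q. (\<forall>y. 0 \<le> q $ y) \<and> (\<Sum>y\<in>UNIV. q $ y) = 1}"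

definition argmin_loss :: "nat \<Rightarrow> (nat \<Rightarrow> real^'n) \<Rightarrow> real^'n \<Rightarrow> nat set" where
  "argmin_loss k L q = {t\<in>{1..k}. \<forall>t'\<in>{1..k}. q \<bullet> L t \<le> q \<bullet> L t'}"

definition loss_matrix :: "nat \<Rightarrow> (nat \<Rightarrow> real^'n) \<Rightarrow> bool" where
  "loss_matrix k L \<longleftrightarrow> (\<forall>t\<in>{1..k}. \<forall>y. 0 \<le> L t $ y)"

definition standing_assumption :: "nat \<Rightarrow> (nat \<Rightarrow> real^'n) \<Rightarrow> bool" where
  "standing_assumption k L \<longleftrightarrow>
     (\<forall>t\<in>{1..k}. \<exists>q\<in>prob_simplex. argmin_loss k L q = {t})"

definition affdim :: "nat \<Rightarrow> (nat \<Rightarrow> real^'n) \<Rightarrow> int" where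
  "affdim k L = aff_dim (L ` {1..k})"

definition convex_set_in :: "nat \<Rightarrow> (nat \<Rightarrow> real) set \<Rightarrow> bool" where
  "convex_set_in d C \<longleftrightarrow> (\<forall>u\<in>C. \<forall>i\<ge>d. u i = 0) \<and>
     (\<forall>u\<in>C. \<forall>v\<in>C. \<forall>\<theta>::real. 0 \<le> \<theta> \<and> \<theta> \<le> 1 \<longrightarrow> (\<lambda>i. \<theta> * u i + (1 - \<theta>) * v i) \<in> C)"

definition convex_surrogate :: "(nat \<Rightarrow> real) set \<Rightarrow> ((nat \<Rightarrow> real) \<Rightarrow> real^'n) \<Rightarrow> bool" where
  "convex_surrogate C \<psi> \<longleftrightarrow> (\<forall>u\<in>C. \<forall>y. 0 \<le> \<psi> u $ y) \<and>
     (\<forall>y. \<forall>u\<in>C. \<forall>v\<in>C. \<forall>\<theta>::real. 0 \<le> \<theta> \<and> \<theta> \<le> 1 \<longrightarrow>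
        \<psi> (\<lambda>i. \<theta> * u i + (1 - \<theta>) * v i) $ y \<le> \<theta> * \<psi> u $ y + (1 - \<theta>) * \<psi> v $ y)"

text \<open>L-calibration; infima are taken in the extended reals (inf of the empty set is +infinity).\<close>
definition calibrated :: "nat \<Rightarrow> (nat \<Rightarrow> real^'n) \<Rightarrow> (nat \<Rightarrow> real) set \<Rightarrow> ((nat \<Rightarrow> real) \<Rightarrow> real^'n) \<Rightarrow> bool" where
  "calibrated k L C \<psi> \<longleftrightarrow> (\<exists>pred :: (nat \<Rightarrow> real) \<Rightarrow> nat. (\<forall>u\<in>C. pred u \<in> {1..k}) \<and>
     (\<forall>q\<in>prob_simplex.
        (INF u\<in>{u\<in>C. pred u \<notin> argmin_loss k L q}. ereal (q \<bullet> \<psi> u))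
          > (INF u\<in>C. ereal (q \<bullet> \<psi> u))))"

definition CC_admissible :: "nat \<Rightarrow> (nat \<Rightarrow> real^'n) \<Rightarrow> nat \<Rightarrow> bool" where
  "CC_admissible k L d \<longleftrightarrow> (\<exists>C (\<psi> :: (nat \<Rightarrow> real) \<Rightarrow> real^'n).
      convex_set_in d C \<and> convex_surrogate C \<psi> \<and> calibrated k L C \<psi>)"

definition CCdim :: "nat \<Rightarrow> (nat \<Rightarrow> real^'n) \<Rightarrow> enat" where
  "CCdim k L = (if \<exists>d. CC_admissible k L d then enat (LEAST d. CC_admissible k L d) else \<infinity>)"

end

theory Submission
  imports Defs
begin

text \<open>Transport an optimal surrogate to a convex set C inside a subspace S of dimension d.
  Since all columns have the same sum, every vector of V = span {l_t - l_1} sums to zero, so the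
  uniform distribution q0 perturbed along V stays in the simplex. At an approximate minimiser u
  of sum_y psi_y, Lagrange duality for the splitting x_y = w yields approximate subgradients
  B_y in S; if dim V > d, some unit v in V satisfies sum_y v_y B_y = 0, and then u remains
  near-optimal for every q0 + t v. Passing to a limit direction l, calibration at q0 + rho l
  and q0 - rho l forces the predicted label into both argmin sets, which are disjoint because
  l is a nonzero vector of V. Hence affdim L = dim V \<le> d.\<close>

lemma inner_nonneg_on_rel_interior_eq_0:
  fixes C :: "'a::euclidean_space set"
  assumes u: "u \<in> rel_interior C" and g: "g \<in> span ((\<lambda>x. x - u) ` C)"
    and nonneg: "\<forall>c\<in>C. 0 \<le> g \<bullet> (c - u)"
  shows "g = 0"
proof (rule ccontr)
  assume gn: "g \<noteq> 0"
  from u obtain e where e: "e > 0" "cball u e \<inter> affine hull C \<subseteq> C" and uC: "u \<in> C"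
    by (auto simp: mem_rel_interior_cball)
  define c where "c = u - (e / norm g) *\<^sub>R g"
  have "dist u c \<le> e" using e gn by (simp add: c_def dist_norm)
  moreover have "c \<in> affine hull C"
  proof -
    have "(\<lambda>x. x - u) ` C = (\<lambda>x. - u + x) ` C" by auto
    hence "- (e / norm g) *\<^sub>R g \<in> span ((\<lambda>x. - u + x) ` C)"
      using g by (metis span_mul scaleR_minus_left)
    hence "c \<in> (\<lambda>x. u + x) ` span ((\<lambda>x. - u + x) ` C)"
      by (force simp: c_def)
    thus ?thesis using affine_hull_insert_span_gen[of u C] uC by (simp add: insert_absorb)
  qed
  ultimately have "0 \<le> g \<bullet> (c - u)" using e nonneg by auto
  moreover have "g \<bullet> (c - u) = - (e / norm g) * (g \<bullet> g)" by (simp add: c_def)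
  moreover have "0 < (e / norm g) * (g \<bullet> g)" using e gn by simp
  ultimately show False by linarith
qed

lemma convex_on_rel_interior_le_add:
  fixes C :: "'a::euclidean_space set"
  assumes F: "convex_on C F" and c0: "c0 \<in> C" and eps: "\<epsilon> > 0"
  shows "\<exists>u\<in>rel_interior C. F u \<le> F c0 + \<epsilon>"
proof -
  have convC: "convex C" using F by (rule convex_on_imp_convex)
  obtain c where c: "c \<in> rel_interior C"
    using rel_interior_eq_empty[OF convC] c0 by blast
  have cC: "c \<in> C" using c rel_interior_subset by auto
  define \<theta> where "\<theta> = min 1 (\<epsilon> / (\<bar>F c - F c0\<bar> + 1))"
  have th: "0 < \<theta>" "\<theta> \<le> 1" unfolding \<theta>_def using eps by auto
  define u where "u = c0 - \<theta> *\<^sub>R (c0 - c)"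
  have "u \<in> rel_interior C" unfolding u_def
    by (rule rel_interior_convex_shrink[OF convC c c0 th])
  moreover have "F u \<le> F c0 + \<epsilon>"
  proof -
    have "u = (1 - \<theta>) *\<^sub>R c0 + \<theta> *\<^sub>R c" unfolding u_def by (simp add: algebra_simps)
    hence "F u \<le> (1 - \<theta>) * F c0 + \<theta> * F c"
      using convex_onD[OF F, of \<theta> c0 c] th c0 cC by simp
    also have "\<dots> = F c0 + \<theta> * (F c - F c0)" by (simp add: algebra_simps)
    also have "\<theta> * (F c - F c0) \<le> \<theta> * \<bar>F c - F c0\<bar>"
      using th by (intro mult_left_mono) auto
    also have "\<dots> \<le> (\<epsilon> / (\<bar>F c - F c0\<bar> + 1)) * (\<bar>F c - F c0\<bar> + 1)"
      unfolding \<theta>_def using eps by (intro mult_mono) auto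
    also have "\<dots> = \<epsilon>" by simp
    finally show ?thesis by simp
  qed
  ultimately show ?thesis by blast
qed

lemma abs_inner_le_norm_mult_sum:
  fixes x z :: "real^'n"
  assumes "\<forall>y. 0 \<le> z$y"
  shows "\<bar>x \<bullet> z\<bar> \<le> norm x * (\<Sum>y\<in>UNIV. z$y)"
proof -
  have "\<bar>x \<bullet> z\<bar> \<le> (\<Sum>y\<in>UNIV. \<bar>x$y * z$y\<bar>)"
    unfolding inner_vec_def by (simp add: sum_abs)
  also have "\<dots> \<le> (\<Sum>y\<in>UNIV. norm x * z$y)"
    by (rule sum_mono) (use assms component_le_norm_cart in \<open>auto simp: abs_mult intro: mult_right_mono\<close>)
  finally show ?thesis by (simp add: sum_distrib_left)
qed

lemma exists_unit_vector_in_kernel: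
  fixes B :: "'a::euclidean_space^'n" and V :: "(real^'n) set"
  assumes V: "subspace V" and S: "subspace S" "\<forall>y. B$y \<in> S" and dim: "dim S < dim V"
  shows "\<exists>v\<in>V. norm v = 1 \<and> (\<Sum>y\<in>UNIV. v$y *\<^sub>R B$y) = 0"
proof -
  define T where "T v = (\<Sum>y\<in>UNIV. v$y *\<^sub>R B$y)" for v :: "real^'n"
  have linT: "linear T" unfolding T_def
    by (rule linearI) (simp_all add: sum.distrib scaleR_add_left scaleR_sum_right)
  have "T ` V \<subseteq> S" unfolding T_def using S by (auto intro!: subspace_sum subspace_scale)
  hence "\<not> inj_on T (span V)"
    using dim_image_eq[OF linT] dim_subset[of "T ` V" S] dim by fastforce
  then obtain v1 v2 where v12: "v1 \<in> V" "v2 \<in> V" "v1 \<noteq> v2" "T v1 = T v2"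
    using V span_eq_iff[of V] unfolding inj_on_def by metis
  define v where "v = (1 / norm (v1 - v2)) *\<^sub>R (v1 - v2)"
  have "v \<in> V" "norm v = 1" "T v = 0"
    using v12 V unfolding v_def
    by (auto simp: subspace_diff subspace_scale linear_cmul[OF linT] linear_diff[OF linT])
  thus ?thesis unfolding T_def by blast
qed

text \<open>Strict epigraph of (x, w) \<mapsto> sum_y psi_y(x_y) on C^n \<times> C, indexed by the residual of the
  consensus constraint x_y = w. Separating (0, mu) from it is Lagrange duality for minimising
  sum_y psi_y over C.\<close>
definition consensus_epigraph :: "'a::real_vector set \<Rightarrow> ('a \<Rightarrow> real^'n) \<Rightarrow> (('a^'n) \<times> real) set" where
  "consensus_epigraph C \<psi> =
     {(\<chi> y. x$y - w, s) | x w s. (\<forall>y. x$y \<in> C) \<and> w \<in> C \<and> (\<Sum>y\<in>UNIV. \<psi> (x$y) $ y) < s}"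

lemma convex_consensus_epigraph:
  assumes cvx: "\<forall>y. convex_on C (\<lambda>u. \<psi> u $ y)"
  shows "convex (consensus_epigraph C \<psi>)"
  unfolding convex_def
proof (intro ballI allI impI)
  define G where "G x = (\<Sum>y\<in>UNIV. \<psi> (x$y) $ y)" for x
  have convC: "convex C" using cvx convex_on_imp_convex by blast
  fix h1 h2 and t1 t2 :: real
  assume h: "h1 \<in> consensus_epigraph C \<psi>" "h2 \<in> consensus_epigraph C \<psi>"
    and t: "0 \<le> t1" "0 \<le> t2" "t1 + t2 = 1"
  obtain x1 w1 s1 where 1: "h1 = (\<chi> y. x1$y - w1, s1)" "\<forall>y. x1$y \<in> C" "w1 \<in> C" "G x1 < s1"
    using h(1) unfolding consensus_epigraph_def G_def by auto
  obtain x2 w2 s2 where 2: "h2 = (\<chi> y. x2$y - w2, s2)" "\<forall>y. x2$y \<in> C" "w2 \<in> C" "G x2 < s2"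
    using h(2) unfolding consensus_epigraph_def G_def by auto
  define x where "x = t1 *\<^sub>R x1 + t2 *\<^sub>R x2"
  define w where "w = t1 *\<^sub>R w1 + t2 *\<^sub>R w2"
  have xC: "\<forall>y. x$y \<in> C" using 1 2 t convC unfolding x_def convex_def by auto
  have wC: "w \<in> C" using 1 2 t convC unfolding w_def convex_def by auto
  have "G x \<le> (\<Sum>y\<in>UNIV. t1 * \<psi> (x1$y) $ y + t2 * \<psi> (x2$y) $ y)"
    unfolding G_def x_def
    by (rule sum_mono) (use cvx 1 2 t in \<open>auto simp: convex_on_def\<close>)
  also have "\<dots> = t1 * G x1 + t2 * G x2"
    unfolding G_def by (simp add: sum.distrib sum_distrib_left)
  also have "\<dots> < t1 * s1 + t2 * s2"
    using t 1 2 by (smt (verit) mult_left_mono mult_strict_left_mono)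
  finally have "G x < t1 * s1 + t2 * s2" .
  moreover have "t1 *\<^sub>R h1 + t2 *\<^sub>R h2 = (\<chi> y. x$y - w, t1 * s1 + t2 * s2)"
    unfolding 1 2 x_def w_def by (simp add: vec_eq_iff algebra_simps)
  ultimately show "t1 *\<^sub>R h1 + t2 *\<^sub>R h2 \<in> consensus_epigraph C \<psi>"
    unfolding consensus_epigraph_def G_def using xC wC by blast
qed

lemma consensus_epigraph_directions:
  "fst ` consensus_epigraph C \<psi> \<subseteq> {Z. \<forall>y. Z$y \<in> span ((\<lambda>x. x - u) ` C)}"
proof
  fix Z assume "Z \<in> fst ` consensus_epigraph C \<psi>"
  then obtain x w where Z: "Z = (\<chi> y. x$y - w)" "\<forall>y. x$y \<in> C" "w \<in> C"
    unfolding consensus_epigraph_def by auto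
  have "(x$y - u) - (w - u) \<in> span ((\<lambda>x. x - u) ` C)" for y
    by (rule span_diff) (use Z in \<open>auto intro: span_base\<close>)
  thus "Z \<in> {Z. \<forall>y. Z$y \<in> span ((\<lambda>x. x - u) ` C)}" using Z by simp
qed

lemma consensus_epigraph_lower_bound:
  assumes lower: "\<forall>c\<in>C. \<mu> \<le> (\<Sum>y\<in>UNIV. \<psi> c $ y)"
  shows "(0, \<mu>) \<notin> consensus_epigraph C \<psi>"
proof
  assume "(0, \<mu>) \<in> consensus_epigraph C \<psi>"
  then obtain x w where "\<forall>y. x$y - w = 0" "w \<in> C" "(\<Sum>y\<in>UNIV. \<psi> (x$y) $ y) < \<mu>"
    unfolding consensus_epigraph_def by (auto simp: vec_eq_iff)
  thus False using lower by fastforce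
qed

lemma consensus_separating_hyperplane:
  fixes C :: "'a::euclidean_space set" and \<psi> :: "'a \<Rightarrow> real^'n"
  assumes cvx: "\<forall>y. convex_on C (\<lambda>u. \<psi> u $ y)" and uC: "u \<in> C"
    and lower: "\<forall>c\<in>C. \<mu> \<le> (\<Sum>y\<in>UNIV. \<psi> c $ y)"
  obtains A :: "'a^'n" and \<beta> where "(A, \<beta>) \<noteq> 0" "\<forall>y. A$y \<in> span ((\<lambda>x. x - u) ` C)"
    and "\<And>x w s. \<forall>y. x$y \<in> C \<Longrightarrow> w \<in> C \<Longrightarrow> (\<Sum>y\<in>UNIV. \<psi> (x$y) $ y) < s \<Longrightarrow>
           \<beta> * \<mu> \<le> (\<Sum>y\<in>UNIV. A$y \<bullet> (x$y - w)) + \<beta> * s"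
proof -
  define H where "H = consensus_epigraph C \<psi>"
  define z where "z = (0::'a^'n, \<mu>)"
  have H_iff: "h \<in> H \<longleftrightarrow> (\<exists>x w s. h = (\<chi> y. x$y - w, s) \<and> (\<forall>y. x$y \<in> C) \<and> w \<in> C \<and>
      (\<Sum>y\<in>UNIV. \<psi> (x$y) $ y) < s)" for h
    unfolding H_def consensus_epigraph_def by blast
  have zH: "z \<notin> H" unfolding z_def H_def by (rule consensus_epigraph_lower_bound[OF lower])
  have "(\<chi> y. u - u, (\<Sum>y\<in>UNIV. \<psi> u $ y) + 1) \<in> H"
    unfolding H_iff
    by (intro exI[of _ "\<chi> y. u"] exI[of _ u] exI[of _ "(\<Sum>y\<in>UNIV. \<psi> u $ y) + 1"]) (simp add: uC)
  hence "H \<noteq> {}" by blast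
  then obtain a b where ahull: "z + a \<in> affine hull (insert z H)" and an: "a \<noteq> 0"
     and az: "a \<bullet> z \<le> b" and aH: "\<And>h. h \<in> H \<Longrightarrow> b \<le> a \<bullet> h"
    using separating_hyperplane_set_point_inaff[OF convex_consensus_epigraph[OF cvx], of z]
      zH unfolding H_def by metis
  obtain A \<beta> where a: "a = (A, \<beta>)" by (cases a)
  define S where "S = span ((\<lambda>x. x - u) ` C)"
  have "\<forall>y. A$y \<in> S"
  proof -
    have "a \<in> span ((\<lambda>x. - z + x) ` H)"
      using ahull unfolding affine_hull_insert_span_gen by auto
    hence "fst a \<in> fst ` span ((\<lambda>x. - z + x) ` H)" by blast
    hence "A \<in> span (fst ` (\<lambda>x. - z + x) ` H)"
      using real_vector.linear_span_image[OF linear_fst] a by auto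
    moreover have "fst ` (\<lambda>x. - z + x) ` H = fst ` H" unfolding z_def by (simp add: image_image)
    ultimately have "A \<in> span (fst ` H)" by simp
    moreover have "subspace {Z::'a^'n. \<forall>y. Z$y \<in> S}"
      unfolding subspace_def S_def by (auto intro: span_add span_scale span_zero)
    hence "span (fst ` H) \<subseteq> {Z. \<forall>y. Z$y \<in> S}"
      unfolding H_def S_def using consensus_epigraph_directions by (rule span_minimal[rotated])
    ultimately show ?thesis by blast
  qed
  moreover have "\<beta> * \<mu> \<le> (\<Sum>y\<in>UNIV. A$y \<bullet> (x$y - w)) + \<beta> * s"
    if "\<forall>y. x$y \<in> C" "w \<in> C" "(\<Sum>y\<in>UNIV. \<psi> (x$y) $ y) < s" for x w s
  proof -
    have "(\<chi> y. x$y - w, s) \<in> H" unfolding H_iff using that by blast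
    hence "a \<bullet> z \<le> a \<bullet> (\<chi> y. x$y - w, s)" using aH az by force
    thus ?thesis unfolding a z_def by (simp add: inner_vec_def)
  qed
  moreover have "(A, \<beta>) \<noteq> 0" using an a by simp
  ultimately show thesis using that unfolding S_def by blast
qed

text \<open>The relative interior point u is the constraint qualification: a vertical hyperplane would
  give a nonzero A in the direction space of C that is nonnegative on C - u.\<close>
lemma consensus_hyperplane_coefficient_pos:
  fixes C :: "'a::euclidean_space set" and \<psi> :: "'a \<Rightarrow> real^'n" and A :: "'a^'n"
  assumes u: "u \<in> rel_interior C" and lower: "\<forall>c\<in>C. \<mu> \<le> (\<Sum>y\<in>UNIV. \<psi> c $ y)"
    and nz: "(A, \<beta>) \<noteq> 0" and AS: "\<forall>y. A$y \<in> span ((\<lambda>x. x - u) ` C)"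
    and ineq: "\<And>x w s. \<forall>y. x$y \<in> C \<Longrightarrow> w \<in> C \<Longrightarrow> (\<Sum>y\<in>UNIV. \<psi> (x$y) $ y) < s \<Longrightarrow>
           \<beta> * \<mu> \<le> (\<Sum>y\<in>UNIV. A$y \<bullet> (x$y - w)) + \<beta> * s"
  shows "0 < \<beta>"
proof -
  have uC: "u \<in> C" using u rel_interior_subset by auto
  have "0 \<le> \<beta>"
  proof -
    define s where "s = (\<Sum>y\<in>UNIV. \<psi> u $ y) + 1"
    have "\<beta> * \<mu> \<le> \<beta> * s" using ineq[of "\<chi> y. u" u s] uC by (simp add: s_def)
    moreover have "\<mu> < s" unfolding s_def using lower uC by fastforce
    ultimately show ?thesis using mult_strict_left_mono_neg[of \<mu> s \<beta>] by linarith
  qed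
  moreover have "\<beta> \<noteq> 0"
  proof
    assume \<beta>: "\<beta> = 0"
    have "A$y = 0" for y
    proof (rule inner_nonneg_on_rel_interior_eq_0[OF u AS[rule_format]], intro ballI)
      fix c assume cC: "c \<in> C"
      define x :: "'a^'n" where "x = (\<chi> y'. if y' = y then c else u)"
      have "(\<Sum>y'\<in>UNIV. A$y' \<bullet> (x$y' - u)) = (\<Sum>y'\<in>UNIV. if y' = y then A$y \<bullet> (c - u) else 0)"
        by (rule sum.cong) (auto simp: x_def)
      thus "0 \<le> A$y \<bullet> (c - u)"
        using ineq[of x u "(\<Sum>y\<in>UNIV. \<psi> (x$y) $ y) + 1"] cC uC \<beta> by (simp add: x_def)
    qed
    hence "A = 0" by (simp add: vec_eq_iff)
    thus False using nz \<beta> by (simp add: zero_prod_def)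
  qed
  ultimately show ?thesis by simp
qed

lemma consensus_multipliers:
  fixes C :: "'a::euclidean_space set" and \<psi> :: "'a \<Rightarrow> real^'n"
  assumes cvx: "\<forall>y. convex_on C (\<lambda>u. \<psi> u $ y)" and u: "u \<in> rel_interior C"
    and lower: "\<forall>c\<in>C. \<mu> \<le> (\<Sum>y\<in>UNIV. \<psi> c $ y)"
  obtains B :: "'a^'n" where "\<forall>y. B$y \<in> span ((\<lambda>x. x - u) ` C)"
    and "\<And>x w. \<forall>y. x$y \<in> C \<Longrightarrow> w \<in> C \<Longrightarrow>
           \<mu> \<le> (\<Sum>y\<in>UNIV. B$y \<bullet> (x$y - w)) + (\<Sum>y\<in>UNIV. \<psi> (x$y) $ y)"
proof -
  have uC: "u \<in> C" using u rel_interior_subset by auto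
  obtain A \<beta> where nz: "(A, \<beta>) \<noteq> 0" and AS: "\<forall>y. A$y \<in> span ((\<lambda>x. x - u) ` C)"
    and ineq: "\<And>x w s. \<forall>y. x$y \<in> C \<Longrightarrow> w \<in> C \<Longrightarrow> (\<Sum>y\<in>UNIV. \<psi> (x$y) $ y) < s \<Longrightarrow>
           \<beta> * \<mu> \<le> (\<Sum>y\<in>UNIV. A$y \<bullet> (x$y - w)) + \<beta> * s"
    using consensus_separating_hyperplane[OF cvx uC lower] by blast
  have \<beta>: "0 < \<beta>" using consensus_hyperplane_coefficient_pos[OF u lower nz AS ineq] .
  show thesis
  proof
    show "\<forall>y. ((1 / \<beta>) *\<^sub>R A)$y \<in> span ((\<lambda>x. x - u) ` C)"
      using AS by (simp add: span_mul)
    fix x :: "'a^'n" and w assume xw: "\<forall>y. x$y \<in> C" "w \<in> C"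
    define P where "P = (\<Sum>y\<in>UNIV. ((1 / \<beta>) *\<^sub>R A)$y \<bullet> (x$y - w))"
    have "\<mu> \<le> P + ((\<Sum>y\<in>UNIV. \<psi> (x$y) $ y) + r)" if "0 < r" for r
    proof -
      have "\<beta> * \<mu> \<le> \<beta> * (P + ((\<Sum>y\<in>UNIV. \<psi> (x$y) $ y) + r))"
        using ineq[OF xw, of "(\<Sum>y\<in>UNIV. \<psi> (x$y) $ y) + r"] that \<beta>
        by (simp add: P_def distrib_left sum_distrib_left)
      thus ?thesis using \<beta> by simp
    qed
    hence "\<mu> \<le> P + (\<Sum>y\<in>UNIV. \<psi> (x$y) $ y)"
      by (metis add.assoc field_le_epsilon)
    thus "\<mu> \<le> (\<Sum>y\<in>UNIV. ((1 / \<beta>) *\<^sub>R A)$y \<bullet> (x$y - w)) + (\<Sum>y\<in>UNIV. \<psi> (x$y) $ y)"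
      unfolding P_def .
  qed
qed

lemma convex_on_sum_fun:
  assumes "finite I" "convex C" "\<And>i. i \<in> I \<Longrightarrow> convex_on C (f i)"
  shows "convex_on C (\<lambda>x. \<Sum>i\<in>I. f i x)"
  using assms by (induction I rule: finite_induct) (auto simp: convex_on_const)

definition uniform_dist :: "real^'n" where
  "uniform_dist = (\<chi> y. 1 / real CARD('n))"

text \<open>The B_y are approximate subgradients of the psi_y at u, and sum_y B_y is an approximate
  normal of C at u. Since sum_y v_y B_y = 0, the optimality certificate for the uniform
  distribution is also one for uniform_dist + t v.\<close>
lemma perturbed_uniform_near_optimal:
  fixes B :: "'a::euclidean_space^'n" and \<psi> :: "'a \<Rightarrow> real^'n" and v :: "real^'n"
  assumes subgrad: "\<forall>y. \<psi> u $ y - B$y \<bullet> (c - u) - E \<le> \<psi> c $ y"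
    and total: "(\<Sum>y\<in>UNIV. B$y) \<bullet> (c - u) \<le> E" and E: "0 \<le> E"
    and kernel: "(\<Sum>y\<in>UNIV. v$y *\<^sub>R B$y) = 0" and v: "(\<Sum>y\<in>UNIV. v$y) = 0"
    and q: "\<forall>y. 0 \<le> (uniform_dist + t *\<^sub>R v)$y"
  shows "(uniform_dist + t *\<^sub>R v) \<bullet> \<psi> u \<le> (uniform_dist + t *\<^sub>R v) \<bullet> \<psi> c + 2 * E"
proof -
  define N where "N = real CARD('n)"
  define q where "q = uniform_dist + t *\<^sub>R v"
  have N: "1 \<le> N" unfolding N_def by simp
  have q_sum: "(\<Sum>y\<in>UNIV. q$y) = 1"
    using v N by (simp add: q_def uniform_dist_def sum.distrib N_def sum_distrib_left[symmetric])
  have qB: "(\<Sum>y\<in>UNIV. q$y *\<^sub>R B$y) = (1 / N) *\<^sub>R (\<Sum>y\<in>UNIV. B$y)"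
  proof -
    have "(\<Sum>y\<in>UNIV. q$y *\<^sub>R B$y)
        = (1 / N) *\<^sub>R (\<Sum>y\<in>UNIV. B$y) + t *\<^sub>R (\<Sum>y\<in>UNIV. v$y *\<^sub>R B$y)"
      by (simp add: q_def uniform_dist_def N_def scaleR_add_left sum.distrib scaleR_sum_right)
    thus ?thesis using kernel by simp
  qed
  have "q \<bullet> \<psi> u - (\<Sum>y\<in>UNIV. q$y *\<^sub>R B$y) \<bullet> (c - u) - E * (\<Sum>y\<in>UNIV. q$y)
      = (\<Sum>y\<in>UNIV. q$y * (\<psi> u $ y - B$y \<bullet> (c - u) - E))"
    by (simp add: inner_vec_def right_diff_distrib sum_subtractf inner_sum_left sum_distrib_left
        mult.commute)
  also have "\<dots> \<le> (\<Sum>y\<in>UNIV. q$y * \<psi> c $ y)"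
    using q unfolding q_def by (intro sum_mono mult_left_mono subgrad[rule_format]) auto
  also have "\<dots> = q \<bullet> \<psi> c" by (simp add: inner_vec_def)
  finally have "q \<bullet> \<psi> u - (1 / N) * ((\<Sum>y\<in>UNIV. B$y) \<bullet> (c - u)) - E \<le> q \<bullet> \<psi> c"
    by (simp add: qB q_sum)
  moreover have "(1 / N) * ((\<Sum>y\<in>UNIV. B$y) \<bullet> (c - u)) \<le> E"
  proof (cases "(\<Sum>y\<in>UNIV. B$y) \<bullet> (c - u) \<le> 0")
    case True
    have "(1 / N) * ((\<Sum>y\<in>UNIV. B$y) \<bullet> (c - u)) \<le> 0"
      using N True by (intro mult_nonneg_nonpos) auto
    thus ?thesis using E by linarith
  next
    case False
    have "(1 / N) * ((\<Sum>y\<in>UNIV. B$y) \<bullet> (c - u)) \<le> 1 * ((\<Sum>y\<in>UNIV. B$y) \<bullet> (c - u))"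
      using N False by (intro mult_right_mono) auto
    thus ?thesis using total by linarith
  qed
  ultimately show ?thesis unfolding q_def by linarith
qed

lemma consensus_bound_approx_subgradients:
  fixes B :: "'a::euclidean_space^'n" and \<psi> :: "'a \<Rightarrow> real^'n"
  assumes B: "\<And>x w. \<forall>y. x$y \<in> C \<Longrightarrow> w \<in> C \<Longrightarrow>
           \<mu> \<le> (\<Sum>y\<in>UNIV. B$y \<bullet> (x$y - w)) + (\<Sum>y\<in>UNIV. \<psi> (x$y) $ y)"
    and uC: "u \<in> C" and cC: "c \<in> C"
  shows "\<forall>y. \<psi> u $ y - B$y \<bullet> (c - u) - ((\<Sum>y\<in>UNIV. \<psi> u $ y) - \<mu>) \<le> \<psi> c $ y"
    and "(\<Sum>y\<in>UNIV. B$y) \<bullet> (c - u) \<le> (\<Sum>y\<in>UNIV. \<psi> u $ y) - \<mu>"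
proof
  fix y
  define x :: "'a^'n" where "x = (\<chi> y'. if y' = y then c else u)"
  have "(\<Sum>y'\<in>UNIV. B$y' \<bullet> (x$y' - u)) = (\<Sum>y'\<in>UNIV. if y' = y then B$y \<bullet> (c - u) else 0)"
    by (rule sum.cong) (auto simp: x_def)
  moreover have "(\<Sum>y'\<in>UNIV. \<psi> (x$y') $ y')
      = (\<Sum>y'\<in>UNIV. \<psi> u $ y' + (if y' = y then \<psi> c $ y - \<psi> u $ y else 0))"
    by (rule sum.cong) (auto simp: x_def)
  moreover have "\<forall>y'. x$y' \<in> C" using uC cC by (simp add: x_def)
  ultimately show "\<psi> u $ y - B$y \<bullet> (c - u) - ((\<Sum>y\<in>UNIV. \<psi> u $ y) - \<mu>) \<le> \<psi> c $ y"
    using B[of x u] uC by (simp add: x_def sum.distrib)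
next
  have "(\<Sum>y\<in>UNIV. B$y \<bullet> (u - c)) = - ((\<Sum>y\<in>UNIV. B$y) \<bullet> (c - u))"
    by (simp add: inner_sum_left sum_negf[symmetric] inner_diff_right sum_subtractf)
  thus "(\<Sum>y\<in>UNIV. B$y) \<bullet> (c - u) \<le> (\<Sum>y\<in>UNIV. \<psi> u $ y) - \<mu>"
    using B[of "\<chi> y. u" c] uC cC by simp
qed

lemma exists_near_optimal_along_unit_direction:
  fixes C :: "'a::euclidean_space set" and \<psi> :: "'a \<Rightarrow> real^'n" and V :: "(real^'n) set"
  assumes cvx: "\<forall>y. convex_on C (\<lambda>u. \<psi> u $ y)" and S: "subspace S" "C \<subseteq> S"
    and V: "subspace V" "dim S < dim V" "\<forall>v\<in>V. (\<Sum>y\<in>UNIV. v$y) = 0"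
    and lower: "\<forall>c\<in>C. \<mu> \<le> (\<Sum>y\<in>UNIV. \<psi> c $ y)"
    and c0: "c0 \<in> C" and eps: "0 < \<epsilon>"
  shows "\<exists>u\<in>C. \<exists>v\<in>V. norm v = 1 \<and> (\<Sum>y\<in>UNIV. \<psi> u $ y) \<le> (\<Sum>y\<in>UNIV. \<psi> c0 $ y) + \<epsilon> \<and>
    (\<forall>t. (\<forall>y. 0 \<le> (uniform_dist + t *\<^sub>R v)$y) \<longrightarrow> (\<forall>c\<in>C.
       (uniform_dist + t *\<^sub>R v) \<bullet> \<psi> u
         \<le> (uniform_dist + t *\<^sub>R v) \<bullet> \<psi> c + 2 * ((\<Sum>y\<in>UNIV. \<psi> u $ y) - \<mu>)))"
proof -
  define F where "F c = (\<Sum>y\<in>UNIV. \<psi> c $ y)" for c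
  have "convex_on C F"
    unfolding F_def using cvx by (intro convex_on_sum_fun) (auto intro: convex_on_imp_convex)
  then obtain u where u: "u \<in> rel_interior C" and Fu: "F u \<le> F c0 + \<epsilon>"
    using convex_on_rel_interior_le_add c0 eps by blast
  have uC: "u \<in> C" using u rel_interior_subset by auto
  define E where "E = (\<Sum>y\<in>UNIV. \<psi> u $ y) - \<mu>"
  have E: "0 \<le> E" using lower uC unfolding E_def by auto
  obtain B :: "'a^'n" where B_span: "\<forall>y. B$y \<in> span ((\<lambda>x. x - u) ` C)"
    and B: "\<And>x w. \<forall>y. x$y \<in> C \<Longrightarrow> w \<in> C \<Longrightarrow>
           \<mu> \<le> (\<Sum>y\<in>UNIV. B$y \<bullet> (x$y - w)) + (\<Sum>y\<in>UNIV. \<psi> (x$y) $ y)"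
    using consensus_multipliers[OF cvx u lower] by blast
  have "(\<lambda>x. x - u) ` C \<subseteq> S" using S uC by (auto intro: subspace_diff)
  hence "span ((\<lambda>x. x - u) ` C) \<subseteq> S" using S(1) by (rule span_minimal)
  then obtain v where v: "v \<in> V" "norm v = 1" "(\<Sum>y\<in>UNIV. v$y *\<^sub>R B$y) = 0"
    using exists_unit_vector_in_kernel[OF V(1) S(1) _ V(2)] B_span by blast
  have opt: "(uniform_dist + t *\<^sub>R v) \<bullet> \<psi> u \<le> (uniform_dist + t *\<^sub>R v) \<bullet> \<psi> c + 2 * E"
    if "\<forall>y. 0 \<le> (uniform_dist + t *\<^sub>R v)$y" "c \<in> C" for t c
    by (rule perturbed_uniform_near_optimal[OF consensus_bound_approx_subgradients[OF B uC that(2),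
          folded E_def] E v(3) V(3)[rule_format, OF v(1)] that(1)])
  show ?thesis
    using uC v Fu opt unfolding F_def E_def by blast
qed

definition threshold_calibrated ::
    "nat \<Rightarrow> (nat \<Rightarrow> real^'n) \<Rightarrow> 'a set \<Rightarrow> ('a \<Rightarrow> real^'n) \<Rightarrow> ('a \<Rightarrow> nat) \<Rightarrow> bool" where
  "threshold_calibrated k L C \<psi> pred \<longleftrightarrow> (\<forall>q\<in>prob_simplex. \<exists>r.
     (\<exists>u\<in>C. q \<bullet> \<psi> u < r) \<and> (\<forall>u\<in>C. q \<bullet> \<psi> u < r \<longrightarrow> pred u \<in> argmin_loss k L q))"

lemma INF_less_INF_imp_threshold:
  fixes f :: "'a \<Rightarrow> real"
  assumes "(INF u\<in>C. ereal (f u)) < (INF u\<in>{u\<in>C. P u}. ereal (f u))"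
  shows "\<exists>r. (\<exists>u\<in>C. f u < r) \<and> (\<forall>u\<in>C. f u < r \<longrightarrow> \<not> P u)"
proof -
  obtain r where r: "(INF u\<in>C. ereal (f u)) < ereal r" "ereal r < (INF u\<in>{u\<in>C. P u}. ereal (f u))"
    using ereal_dense2[OF assms] by blast
  have "\<not> P u" if "u \<in> C" "f u < r" for u
  proof
    assume "P u"
    hence "(INF u\<in>{u\<in>C. P u}. ereal (f u)) \<le> ereal (f u)" using that by (auto intro: INF_lower)
    with r(2) have "ereal r < ereal (f u)" by (rule order.strict_trans2)
    thus False using that(2) by simp
  qed
  moreover have "\<exists>u\<in>C. f u < r" using r(1) by (auto simp: INF_less_iff)
  ultimately show ?thesis by blast
qed

lemma calibrated_imp_threshold_calibrated:
  fixes L :: "nat \<Rightarrow> real^'n"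
  assumes "calibrated k L C \<psi>"
  obtains pred where "threshold_calibrated k L C \<psi> pred"
proof -
  obtain pred where cal: "\<forall>q\<in>prob_simplex. (INF u\<in>C. ereal (q \<bullet> \<psi> u))
      < (INF u\<in>{u\<in>C. pred u \<notin> argmin_loss k L q}. ereal (q \<bullet> \<psi> u))"
    using assms unfolding calibrated_def by blast
  have "threshold_calibrated k L C \<psi> pred"
    unfolding threshold_calibrated_def
  proof
    fix q :: "real^'n" assume "q \<in> prob_simplex"
    from INF_less_INF_imp_threshold[OF cal[rule_format, OF this]]
    show "\<exists>r. (\<exists>u\<in>C. q \<bullet> \<psi> u < r) \<and> (\<forall>u\<in>C. q \<bullet> \<psi> u < r \<longrightarrow> pred u \<in> argmin_loss k L q)"
      by blast
  qed
  thus thesis by (rule that)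
qed

lemma eventually_below_threshold:
  fixes \<psi> :: "'a \<Rightarrow> real^'n" and Q :: "nat \<Rightarrow> real^'n"
  assumes nonneg: "\<forall>u\<in>C. \<forall>y. 0 \<le> \<psi> u $ y"
    and u0: "u0 \<in> C" "q \<bullet> \<psi> u0 < r"
    and Q: "Q \<longlonglongrightarrow> q" and e: "e \<longlonglongrightarrow> 0"
    and U: "\<forall>j. U j \<in> C" "\<forall>j. Q j \<bullet> \<psi> (U j) \<le> Q j \<bullet> \<psi> u0 + e j"
    and bound: "\<forall>j. (\<Sum>y\<in>UNIV. \<psi> (U j) $ y) \<le> K"
  shows "eventually (\<lambda>j. q \<bullet> \<psi> (U j) < r) sequentially"
proof -
  define F where "F u = (\<Sum>y\<in>UNIV. \<psi> u $ y)" for u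
  define \<gamma> where "\<gamma> = r - q \<bullet> \<psi> u0"
  define M where "M = \<bar>K\<bar> + F u0 + 1"
  have "0 \<le> F u0" unfolding F_def using nonneg u0(1) by (simp add: sum_nonneg)
  hence \<gamma>: "0 < \<gamma>" and M: "0 < M" using u0(2) unfolding \<gamma>_def M_def by auto
  have "eventually (\<lambda>j. dist (Q j) q < \<gamma> / (2 * M)) sequentially"
    using Q \<gamma> M by (intro tendstoD) auto
  moreover have "eventually (\<lambda>j. dist (e j) 0 < \<gamma> / 2) sequentially"
    using e \<gamma> by (intro tendstoD) auto
  ultimately show ?thesis
  proof eventually_elim
    case (elim j)
    have nn: "\<forall>y. 0 \<le> \<psi> (U j) $ y" "\<forall>y. 0 \<le> \<psi> u0 $ y" using nonneg U(1) u0(1) by auto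
    have "\<bar>(q - Q j) \<bullet> \<psi> (U j)\<bar> \<le> norm (q - Q j) * F (U j)"
      unfolding F_def by (rule abs_inner_le_norm_mult_sum[OF nn(1)])
    hence "q \<bullet> \<psi> (U j) - Q j \<bullet> \<psi> (U j) \<le> norm (q - Q j) * F (U j)"
      by (simp add: inner_diff_left)
    moreover have "\<bar>(q - Q j) \<bullet> \<psi> u0\<bar> \<le> norm (q - Q j) * F u0"
      unfolding F_def by (rule abs_inner_le_norm_mult_sum[OF nn(2)])
    hence "Q j \<bullet> \<psi> u0 - q \<bullet> \<psi> u0 \<le> norm (q - Q j) * F u0"
      by (simp add: inner_diff_left)
    moreover have "norm (q - Q j) * F (U j) + norm (q - Q j) * F u0 \<le> norm (q - Q j) * M"
    proof -
      have "F (U j) + F u0 \<le> M"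
        using bound[rule_format, of j] abs_ge_self[of K] unfolding M_def F_def by linarith
      thus ?thesis by (simp add: distrib_left[symmetric] mult_left_mono)
    qed
    moreover have "norm (q - Q j) * M < \<gamma> / 2"
      using elim M by (simp add: dist_norm norm_minus_commute field_simps)
    moreover have "e j < \<gamma> / 2" using elim by (simp add: dist_norm)
    moreover have "Q j \<bullet> \<psi> (U j) \<le> Q j \<bullet> \<psi> u0 + e j" using U(2) by blast
    ultimately show ?case unfolding \<gamma>_def by argo
  qed
qed

lemma uniform_perturbation_in_prob_simplex:
  fixes w :: "real^'n"
  assumes "\<bar>s\<bar> \<le> 1 / real CARD('n)" "norm w \<le> 1" "(\<Sum>y\<in>UNIV. w$y) = 0"
  shows "uniform_dist + s *\<^sub>R w \<in> prob_simplex"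
proof -
  have "0 \<le> 1 / real CARD('n) + s * w$y" for y
  proof -
    have "\<bar>s * w$y\<bar> \<le> 1 / real CARD('n) * 1"
      unfolding abs_mult using assms component_le_norm_cart[of w y] by (intro mult_mono) auto
    thus ?thesis by linarith
  qed
  thus ?thesis using assms(3)
    by (simp add: prob_simplex_def uniform_dist_def sum.distrib sum_distrib_left[symmetric])
qed

lemma argmin_loss_opposite_perturbations_disjoint:
  fixes L :: "nat \<Rightarrow> real^'n" and v :: "real^'n"
  assumes sums: "\<forall>t\<in>{1..k}. (\<Sum>y\<in>UNIV. L t $ y) = (\<Sum>y\<in>UNIV. L 1 $ y)"
    and v: "v \<in> span ((\<lambda>x. x - L 1) ` L ` {1..k})" "v \<noteq> 0" and \<rho>: "0 < \<rho>"
  shows "argmin_loss k L (uniform_dist + \<rho> *\<^sub>R v) \<inter> argmin_loss k L (uniform_dist - \<rho> *\<^sub>R v) = {}"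
proof (rule ccontr)
  assume "\<not> ?thesis"
  then obtain t where tp: "t \<in> argmin_loss k L (uniform_dist + \<rho> *\<^sub>R v)"
    and tm: "t \<in> argmin_loss k L (uniform_dist - \<rho> *\<^sub>R v)" by blast
  have t: "t \<in> {1..k}" using tp unfolding argmin_loss_def by blast
  have plus: "\<forall>t'\<in>{1..k}. (uniform_dist + \<rho> *\<^sub>R v) \<bullet> L t \<le> (uniform_dist + \<rho> *\<^sub>R v) \<bullet> L t'"
    using tp unfolding argmin_loss_def by blast
  have minus: "\<forall>t'\<in>{1..k}. (uniform_dist - \<rho> *\<^sub>R v) \<bullet> L t \<le> (uniform_dist - \<rho> *\<^sub>R v) \<bullet> L t'"
    using tm unfolding argmin_loss_def by blast
  have uniform: "uniform_dist \<bullet> L t' = uniform_dist \<bullet> L t" if "t' \<in> {1..k}" for t'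
  proof -
    have "(\<Sum>y\<in>UNIV. L t' $ y) = (\<Sum>y\<in>UNIV. L t $ y)"
      using sums[rule_format, OF t] sums[rule_format, OF that] by simp
    thus ?thesis by (simp add: uniform_dist_def inner_vec_def sum_divide_distrib[symmetric])
  qed
  have orth: "v \<bullet> L t' = v \<bullet> L t" if t': "t' \<in> {1..k}" for t'
  proof -
    have "\<rho> * (v \<bullet> L t) \<le> \<rho> * (v \<bullet> L t')"
      using plus[rule_format, OF t'] uniform[OF t'] by (simp add: inner_add_left)
    moreover have "\<rho> * (v \<bullet> L t') \<le> \<rho> * (v \<bullet> L t)"
      using minus[rule_format, OF t'] uniform[OF t'] by (simp add: inner_diff_left)
    ultimately show ?thesis using \<rho> by (meson mult_le_cancel_left_pos order_antisym)
  qed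
  have "(\<lambda>x. x - L 1) ` L ` {1..k} \<subseteq> {x. v \<bullet> x = 0}"
  proof
    fix x assume "x \<in> (\<lambda>x. x - L 1) ` L ` {1..k}"
    then obtain t' where t': "t' \<in> {1..k}" "x = L t' - L 1" by auto
    have "1 \<in> {1..k}" using t by auto
    thus "x \<in> {x. v \<bullet> x = 0}" using orth[OF t'(1)] orth[of 1] t'(2) by (simp add: inner_diff_right)
  qed
  moreover have "subspace {x. v \<bullet> x = 0}" by (auto simp: subspace_def inner_add_right)
  ultimately have "v \<in> {x. v \<bullet> x = 0}" using v(1) span_minimal by blast
  thus False using v(2) by simp
qed

lemma column_sums_eq_of_permuted_columns:
  fixes L :: "nat \<Rightarrow> real^'n"
  assumes "\<forall>t1\<in>{1..k}. \<forall>t2\<in>{1..k}. \<exists>\<sigma>. \<sigma> permutes (UNIV :: 'n set) \<and> (\<forall>y. L t2 $ y = L t1 $ \<sigma> y)"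
  shows "\<forall>t\<in>{1..k}. (\<Sum>y\<in>UNIV. L t $ y) = (\<Sum>y\<in>UNIV. L 1 $ y)"
proof
  fix t assume t: "t \<in> {1..k}"
  then obtain \<sigma> where \<sigma>: "\<sigma> permutes (UNIV :: 'n set)" "\<forall>y. L t $ y = L 1 $ \<sigma> y"
    using assms by fastforce
  show "(\<Sum>y\<in>UNIV. L t $ y) = (\<Sum>y\<in>UNIV. L 1 $ y)"
    using sum.permute[OF \<sigma>(1), of "\<lambda>y. L 1 $ y"] \<sigma>(2) by simp
qed

lemma sum_eq_0_on_span_column_differences:
  fixes L :: "nat \<Rightarrow> real^'n"
  assumes sums: "\<forall>t\<in>{1..k}. (\<Sum>y\<in>UNIV. L t $ y) = (\<Sum>y\<in>UNIV. L 1 $ y)"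
  shows "\<forall>v\<in>span ((\<lambda>x. x - L 1) ` L ` {1..k}). (\<Sum>y\<in>UNIV. v$y) = 0"
proof -
  have "subspace {v::real^'n. (\<Sum>y\<in>UNIV. v$y) = 0}"
    by (auto simp: subspace_def sum.distrib sum_distrib_left[symmetric])
  moreover have "(\<lambda>x. x - L 1) ` L ` {1..k} \<subseteq> {v. (\<Sum>y\<in>UNIV. v$y) = 0}"
  proof
    fix x assume "x \<in> (\<lambda>x. x - L 1) ` L ` {1..k}"
    then obtain t where t: "t \<in> {1..k}" "x = L t - L 1" by auto
    thus "x \<in> {v. (\<Sum>y\<in>UNIV. v$y) = 0}" using sums[rule_format, OF t(1)] by (simp add: sum_subtractf)
  qed
  ultimately show ?thesis using span_minimal by blast
qed

lemma affdim_eq_dim_column_differences: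
  assumes "1 \<le> k"
  shows "affdim k L = int (dim (span ((\<lambda>x. x - L 1) ` L ` {1..k})))"
  unfolding affdim_def dim_span
  by (rule aff_dim_eq_dim_subtract) (use assms in \<open>auto intro: hull_inc\<close>)

lemma CCdim_eq_enat_imp_CC_admissible:
  assumes "CCdim k L = enat d"
  shows "CC_admissible k L d"
proof -
  have ex: "\<exists>d. CC_admissible k L d" using assms unfolding CCdim_def by (auto split: if_splits)
  hence "d = (LEAST d. CC_admissible k L d)" using assms unfolding CCdim_def by auto
  thus ?thesis using LeastI_ex[OF ex] by simp
qed

lemma exists_near_optimal_sequence:
  fixes C :: "'a::euclidean_space set" and \<psi> :: "'a \<Rightarrow> real^'n" and V :: "(real^'n) set"
  assumes cvx: "\<forall>y. convex_on C (\<lambda>u. \<psi> u $ y)" and nonneg: "\<forall>u\<in>C. \<forall>y. 0 \<le> \<psi> u $ y"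
    and S: "subspace S" "C \<subseteq> S" and V: "subspace V" "dim S < dim V" "\<forall>v\<in>V. (\<Sum>y\<in>UNIV. v$y) = 0"
    and "C \<noteq> {}"
  obtains U W K where "\<forall>j. U j \<in> C" "\<forall>j. W j \<in> V \<and> norm (W j) = 1"
    "\<forall>j. (\<Sum>y\<in>UNIV. \<psi> (U j) $ y) \<le> K"
    "\<And>j t c. \<forall>y. 0 \<le> (uniform_dist + t *\<^sub>R W j)$y \<Longrightarrow> c \<in> C \<Longrightarrow>
       (uniform_dist + t *\<^sub>R W j) \<bullet> \<psi> (U j)
         \<le> (uniform_dist + t *\<^sub>R W j) \<bullet> \<psi> c + 2 * inverse (real (Suc j))"
proof -
  define F where "F u = (\<Sum>y\<in>UNIV. \<psi> u $ y)" for u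
  define \<mu> where "\<mu> = Inf (F ` C)"
  have "bdd_below (F ` C)"
    using nonneg unfolding F_def by (intro bdd_belowI[of _ 0]) (auto intro: sum_nonneg)
  hence lower: "\<forall>c\<in>C. \<mu> \<le> F c" unfolding \<mu>_def by (auto intro: cInf_lower)
  define good where "good j u w \<longleftrightarrow> u \<in> C \<and> w \<in> V \<and> norm w = 1 \<and> F u \<le> \<mu> + 1 \<and>
    (\<forall>t. (\<forall>y. 0 \<le> (uniform_dist + t *\<^sub>R w)$y) \<longrightarrow> (\<forall>c\<in>C.
       (uniform_dist + t *\<^sub>R w) \<bullet> \<psi> u \<le> (uniform_dist + t *\<^sub>R w) \<bullet> \<psi> c + 2 * inverse (real (Suc j))))"
    for j u w
  have "\<exists>u w. good j u w" for j
  proof -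
    define e where "e = inverse (real (Suc j))"
    have e: "0 < e" "e \<le> 1" unfolding e_def by (auto simp: inverse_le_1_iff)
    obtain c0 where c0: "c0 \<in> C" "F c0 < \<mu> + e / 2"
      using cInf_lessD[of "F ` C" "\<mu> + e / 2"] \<open>C \<noteq> {}\<close> e unfolding \<mu>_def by auto
    obtain u w where "u \<in> C" "w \<in> V" "norm w = 1" "F u \<le> F c0 + e / 2"
      and opt: "\<forall>t. (\<forall>y. 0 \<le> (uniform_dist + t *\<^sub>R w)$y) \<longrightarrow> (\<forall>c\<in>C.
        (uniform_dist + t *\<^sub>R w) \<bullet> \<psi> u \<le> (uniform_dist + t *\<^sub>R w) \<bullet> \<psi> c + 2 * (F u - \<mu>))"
      using exists_near_optimal_along_unit_direction[OF cvx S V(1) V(2) V(3), of \<mu> c0 "e / 2"]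
        lower c0(1) e(1) unfolding F_def by auto
    moreover have "F u - \<mu> \<le> e" and "F u \<le> \<mu> + 1" using \<open>F u \<le> F c0 + e / 2\<close> c0(2) e by auto
    ultimately have "good j u w" unfolding good_def e_def by (smt (verit, del_insts))
    thus ?thesis by blast
  qed
  then obtain U W where "\<And>j. good j (U j) (W j)" by metis
  thus thesis using that[of U W "\<mu> + 1"] unfolding good_def F_def by blast
qed

lemma eventually_pred_in_argmin:
  fixes \<psi> :: "'a \<Rightarrow> real^'n" and Q :: "nat \<Rightarrow> real^'n"
  assumes cal: "threshold_calibrated k L C \<psi> pred" and nonneg: "\<forall>u\<in>C. \<forall>y. 0 \<le> \<psi> u $ y"
    and q: "q \<in> prob_simplex" and Q: "Q \<longlonglongrightarrow> q" and e: "e \<longlonglongrightarrow> 0"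
    and U: "\<forall>j. U j \<in> C" "\<forall>j. (\<Sum>y\<in>UNIV. \<psi> (U j) $ y) \<le> K"
    and opt: "\<And>j c. c \<in> C \<Longrightarrow> Q j \<bullet> \<psi> (U j) \<le> Q j \<bullet> \<psi> c + e j"
  shows "eventually (\<lambda>j. pred (U j) \<in> argmin_loss k L q) sequentially"
proof -
  obtain r u0 where u0: "u0 \<in> C" "q \<bullet> \<psi> u0 < r"
    and r: "\<forall>u\<in>C. q \<bullet> \<psi> u < r \<longrightarrow> pred u \<in> argmin_loss k L q"
    using cal q unfolding threshold_calibrated_def by blast
  have "eventually (\<lambda>j. q \<bullet> \<psi> (U j) < r) sequentially"
    using eventually_below_threshold[OF nonneg u0 Q e U(1) _ U(2)] opt u0(1) by blast
  thus ?thesis using r U(1) by (auto elim: eventually_mono)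
qed

lemma eventually_pred_in_argmin_perturbed:
  fixes \<psi> :: "'a \<Rightarrow> real^'n" and W :: "nat \<Rightarrow> real^'n"
  assumes cal: "threshold_calibrated k L C \<psi> pred" and nonneg: "\<forall>u\<in>C. \<forall>y. 0 \<le> \<psi> u $ y"
    and U: "\<forall>j. U j \<in> C" "\<forall>j. (\<Sum>y\<in>UNIV. \<psi> (U j) $ y) \<le> K"
    and W: "\<forall>j. norm (W j) \<le> 1 \<and> (\<Sum>y\<in>UNIV. W j $ y) = 0" and lim: "W \<longlonglongrightarrow> l"
    and l: "norm l \<le> 1" "(\<Sum>y\<in>UNIV. l $ y) = 0" and s: "\<bar>s\<bar> \<le> 1 / real CARD('n)"
    and e: "e \<longlonglongrightarrow> 0"
    and opt: "\<And>j t c. \<forall>y. 0 \<le> (uniform_dist + t *\<^sub>R W j)$y \<Longrightarrow> c \<in> C \<Longrightarrow>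
       (uniform_dist + t *\<^sub>R W j) \<bullet> \<psi> (U j) \<le> (uniform_dist + t *\<^sub>R W j) \<bullet> \<psi> c + e j"
  shows "eventually (\<lambda>j. pred (U j) \<in> argmin_loss k L (uniform_dist + s *\<^sub>R l)) sequentially"
proof (rule eventually_pred_in_argmin[OF cal nonneg _ _ e U])
  show "uniform_dist + s *\<^sub>R l \<in> prob_simplex"
    using uniform_perturbation_in_prob_simplex[OF s l] .
  show "(\<lambda>j. uniform_dist + s *\<^sub>R W j) \<longlonglongrightarrow> uniform_dist + s *\<^sub>R l"
    using lim by (intro tendsto_intros)
  show "(uniform_dist + s *\<^sub>R W j) \<bullet> \<psi> (U j) \<le> (uniform_dist + s *\<^sub>R W j) \<bullet> \<psi> c + e j"
    if "c \<in> C" for j c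
    using opt[OF _ that] uniform_perturbation_in_prob_simplex[OF s, of "W j"] W
    unfolding prob_simplex_def by auto
qed

lemma near_optimal_unit_sequence_absurd:
  fixes \<psi> :: "'a \<Rightarrow> real^'n" and L :: "nat \<Rightarrow> real^'n" and W :: "nat \<Rightarrow> real^'n"
  assumes cal: "threshold_calibrated k L C \<psi> pred" and nonneg: "\<forall>u\<in>C. \<forall>y. 0 \<le> \<psi> u $ y"
    and sums: "\<forall>t\<in>{1..k}. (\<Sum>y\<in>UNIV. L t $ y) = (\<Sum>y\<in>UNIV. L 1 $ y)"
    and U: "\<forall>j. U j \<in> C" and K: "\<forall>j. (\<Sum>y\<in>UNIV. \<psi> (U j) $ y) \<le> K"
    and W: "\<forall>j. W j \<in> span ((\<lambda>x. x - L 1) ` L ` {1..k}) \<and> norm (W j) = 1"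
    and opt: "\<And>j t c. \<forall>y. 0 \<le> (uniform_dist + t *\<^sub>R W j)$y \<Longrightarrow> c \<in> C \<Longrightarrow>
       (uniform_dist + t *\<^sub>R W j) \<bullet> \<psi> (U j)
         \<le> (uniform_dist + t *\<^sub>R W j) \<bullet> \<psi> c + 2 * inverse (real (Suc j))"
  shows False
proof -
  define V where "V = span ((\<lambda>x. x - L 1) ` L ` {1..k})"
  define \<rho> where "\<rho> = 1 / real CARD('n)"
  have V: "subspace V" "\<forall>v\<in>V. (\<Sum>y\<in>UNIV. v$y) = 0"
    unfolding V_def using sum_eq_0_on_span_column_differences[OF sums] by auto
  have "seq_compact (sphere (0::real^'n) 1 \<inter> V)"
    by (intro compact_imp_seq_compact compact_Int_closed compact_sphere closed_subspace V(1))
  moreover have "\<forall>j. W j \<in> sphere 0 1 \<inter> V" using W unfolding V_def by auto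
  ultimately obtain l r where l: "l \<in> sphere 0 1 \<inter> V" and r: "strict_mono r"
    and lim: "(W \<circ> r) \<longlonglongrightarrow> l"
    by (rule seq_compactE)
  have e: "(\<lambda>j. 2 * inverse (real (Suc (r j)))) \<longlonglongrightarrow> 0"
    using LIMSEQ_subseq_LIMSEQ[OF LIMSEQ_inverse_real_of_nat r]
    by (auto intro: tendsto_mult_right_zero simp: comp_def)
  have eventually_argmin:
    "eventually (\<lambda>j. pred ((U \<circ> r) j) \<in> argmin_loss k L (uniform_dist + s *\<^sub>R l)) sequentially"
    if "\<bar>s\<bar> = \<rho>" for s
  proof (rule eventually_pred_in_argmin_perturbed[OF cal nonneg _ _ _ lim _ _ _ e])
    show "(uniform_dist + t *\<^sub>R (W \<circ> r) j) \<bullet> \<psi> ((U \<circ> r) j)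
        \<le> (uniform_dist + t *\<^sub>R (W \<circ> r) j) \<bullet> \<psi> c + 2 * inverse (real (Suc (r j)))"
      if "\<forall>y. 0 \<le> (uniform_dist + t *\<^sub>R (W \<circ> r) j)$y" "c \<in> C" for j t c
      using that unfolding comp_def by (rule opt)
  qed (use U K W l V that in \<open>auto simp: \<rho>_def V_def\<close>)
  have "0 < \<rho>" unfolding \<rho>_def by simp
  have disjoint: "argmin_loss k L (uniform_dist + \<rho> *\<^sub>R l) \<inter> argmin_loss k L (uniform_dist - \<rho> *\<^sub>R l) = {}"
  proof -
    have "norm l = 1" "l \<in> V" using l by auto
    hence "l \<noteq> 0" "l \<in> V" by auto
    thus ?thesis
      using argmin_loss_opposite_perturbations_disjoint[OF sums, of l \<rho>] \<open>0 < \<rho>\<close>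
      unfolding V_def by blast
  qed
  have "eventually (\<lambda>j. pred ((U \<circ> r) j) \<in> argmin_loss k L (uniform_dist + \<rho> *\<^sub>R l) \<and>
      pred ((U \<circ> r) j) \<in> argmin_loss k L (uniform_dist - \<rho> *\<^sub>R l)) sequentially"
    using eventually_conj[OF eventually_argmin[of \<rho>] eventually_argmin[of "- \<rho>"]] \<open>0 < \<rho>\<close>
    by simp
  hence "eventually (\<lambda>j. False) sequentially"
    by (rule eventually_mono) (use disjoint in blast)
  thus False by simp
qed

lemma dim_column_differences_le:
  fixes C :: "'a::euclidean_space set" and \<psi> :: "'a \<Rightarrow> real^'n" and L :: "nat \<Rightarrow> real^'n"
  assumes cvx: "\<forall>y. convex_on C (\<lambda>u. \<psi> u $ y)" and nonneg: "\<forall>u\<in>C. \<forall>y. 0 \<le> \<psi> u $ y"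
    and S: "subspace S" "C \<subseteq> S"
    and sums: "\<forall>t\<in>{1..k}. (\<Sum>y\<in>UNIV. L t $ y) = (\<Sum>y\<in>UNIV. L 1 $ y)"
    and cal: "threshold_calibrated k L C \<psi> pred"
  shows "dim (span ((\<lambda>x. x - L 1) ` L ` {1..k})) \<le> dim S"
proof (rule ccontr)
  have "uniform_dist \<in> prob_simplex" using uniform_perturbation_in_prob_simplex[of 0 0] by simp
  hence "C \<noteq> {}" using cal unfolding threshold_calibrated_def by blast
  assume "\<not> dim (span ((\<lambda>x. x - L 1) ` L ` {1..k})) \<le> dim S"
  then obtain U W K where "\<forall>j. U j \<in> C" "\<forall>j. W j \<in> span ((\<lambda>x. x - L 1) ` L ` {1..k}) \<and> norm (W j) = 1"
    "\<forall>j. (\<Sum>y\<in>UNIV. \<psi> (U j) $ y) \<le> K"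
    "\<And>j t c. \<forall>y. 0 \<le> (uniform_dist + t *\<^sub>R W j)$y \<Longrightarrow> c \<in> C \<Longrightarrow>
       (uniform_dist + t *\<^sub>R W j) \<bullet> \<psi> (U j)
         \<le> (uniform_dist + t *\<^sub>R W j) \<bullet> \<psi> c + 2 * inverse (real (Suc j))"
    using exists_near_optimal_sequence[OF cvx nonneg S subspace_span _
        sum_eq_0_on_span_column_differences[OF sums] \<open>C \<noteq> {}\<close>]
    by (metis not_le)
  thus False using near_optimal_unit_sequence_absurd[OF cal nonneg sums] by blast
qed

lemma cart_embedding_of_initial_segment:
  assumes "d \<le> CARD('m::finite)"
  obtains Emb :: "(nat \<Rightarrow> real) \<Rightarrow> real^'m" and Inv :: "real^'m \<Rightarrow> nat \<Rightarrow> real"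
    and S :: "(real^'m) set"
  where "\<And>u. \<forall>i\<ge>d. u i = 0 \<Longrightarrow> Inv (Emb u) = u"
    and "\<And>a b u v. Emb (\<lambda>i. a * u i + b * v i) = a *\<^sub>R Emb u + b *\<^sub>R Emb v"
    and "subspace S" "dim S \<le> d" "\<And>u. Emb u \<in> S"
proof -
  obtain g :: "nat \<Rightarrow> 'm" where "bij_betw g {0..<CARD('m)} UNIV"
    using ex_bij_betw_nat_finite[of "UNIV :: 'm set"] by auto
  hence g: "inj_on g {..<d}"
    using assms by (auto intro: inj_on_subset[OF bij_betw_imp_inj_on])
  define Emb :: "(nat \<Rightarrow> real) \<Rightarrow> real^'m" where "Emb u = (\<Sum>i<d. u i *\<^sub>R axis (g i) 1)" for u
  define Inv :: "real^'m \<Rightarrow> nat \<Rightarrow> real" where "Inv x = (\<lambda>i. if i < d then x $ g i else 0)" for x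
  define S where "S = span ((\<lambda>i. axis (g i) (1::real)) ` {..<d})"
  show thesis
  proof
    fix u :: "nat \<Rightarrow> real" assume u: "\<forall>i\<ge>d. u i = 0"
    show "Inv (Emb u) = u"
    proof
      fix j
      have "Emb u $ g j = (\<Sum>i<d. if i = j then u i else 0)" if "j < d"
        unfolding Emb_def sum_component
        by (rule sum.cong) (use that g in \<open>auto simp: axis_def inj_on_def\<close>)
      thus "Inv (Emb u) j = u j" using u by (simp add: Inv_def)
    qed
  next
    show "Emb (\<lambda>i. a * u i + b * v i) = a *\<^sub>R Emb u + b *\<^sub>R Emb v" for a b u v
      unfolding Emb_def by (simp add: scaleR_add_left sum.distrib scaleR_sum_right)
  next
    show "subspace S" unfolding S_def by simp
    have "dim S \<le> card ((\<lambda>i. axis (g i) (1::real)) ` {..<d})"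
      unfolding S_def by (rule dim_le_card) auto
    also have "\<dots> \<le> d" using card_image_le[of "{..<d}"] by simp
    finally show "dim S \<le> d" .
    show "Emb u \<in> S" for u
      unfolding S_def Emb_def by (intro span_sum span_scale span_base) simp
  qed
qed

lemma convex_on_embedded_surrogate:
  fixes Emb :: "(nat \<Rightarrow> real) \<Rightarrow> 'b::real_vector" and \<psi> :: "(nat \<Rightarrow> real) \<Rightarrow> real^'n"
  assumes C: "convex_set_in d C" and \<psi>: "convex_surrogate C \<psi>"
    and inv: "\<And>u. u \<in> C \<Longrightarrow> Inv (Emb u) = u"
    and lin: "\<And>a b u v. Emb (\<lambda>i. a * u i + b * v i) = a *\<^sub>R Emb u + b *\<^sub>R Emb v"
  shows "convex_on (Emb ` C) (\<lambda>x. \<psi> (Inv x) $ y)"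
proof -
  have "a *\<^sub>R Emb u + b *\<^sub>R Emb v \<in> Emb ` C \<and>
      \<psi> (Inv (a *\<^sub>R Emb u + b *\<^sub>R Emb v)) $ y \<le> a * \<psi> (Inv (Emb u)) $ y + b * \<psi> (Inv (Emb v)) $ y"
    if uv: "u \<in> C" "v \<in> C" and ab: "0 \<le> a" "0 \<le> b" "a + b = 1" for a b u v
  proof -
    have b: "b = 1 - a" using ab by simp
    have "(\<lambda>i. a * u i + (1 - a) * v i) \<in> C"
      using C uv ab b unfolding convex_set_in_def by simp
    moreover have "\<psi> (\<lambda>i. a * u i + (1 - a) * v i) $ y \<le> a * \<psi> u $ y + (1 - a) * \<psi> v $ y"
      using \<psi> uv ab b unfolding convex_surrogate_def by simp
    moreover have "a *\<^sub>R Emb u + (1 - a) *\<^sub>R Emb v = Emb (\<lambda>i. a * u i + (1 - a) * v i)"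
      by (rule lin[symmetric])
    ultimately show ?thesis unfolding b using uv by (simp add: inv)
  qed
  hence "a *\<^sub>R x + b *\<^sub>R z \<in> Emb ` C \<and>
      \<psi> (Inv (a *\<^sub>R x + b *\<^sub>R z)) $ y \<le> a * \<psi> (Inv x) $ y + b * \<psi> (Inv z) $ y"
    if "x \<in> Emb ` C" "z \<in> Emb ` C" "0 \<le> a" "0 \<le> b" "a + b = 1" for a b x z
    using that by (elim imageE) simp
  thus ?thesis unfolding convex_on_def convex_def by simp
qed

lemma threshold_calibrated_image:
  fixes L :: "nat \<Rightarrow> real^'n"
  assumes cal: "threshold_calibrated k L C \<psi> pred" and inv: "\<And>u. u \<in> C \<Longrightarrow> Inv (Emb u) = u"
  shows "threshold_calibrated k L (Emb ` C) (\<lambda>x. \<psi> (Inv x)) (\<lambda>x. pred (Inv x))"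
  unfolding threshold_calibrated_def
proof
  fix q :: "real^'n" assume "q \<in> prob_simplex"
  then obtain r where r: "\<exists>u\<in>C. q \<bullet> \<psi> u < r" "\<forall>u\<in>C. q \<bullet> \<psi> u < r \<longrightarrow> pred u \<in> argmin_loss k L q"
    using cal unfolding threshold_calibrated_def by blast
  have "\<exists>x\<in>Emb ` C. q \<bullet> \<psi> (Inv x) < r" using r(1) inv by force
  moreover have "\<forall>x\<in>Emb ` C. q \<bullet> \<psi> (Inv x) < r \<longrightarrow> pred (Inv x) \<in> argmin_loss k L q"
    using r(2) inv by force
  ultimately show "\<exists>r. (\<exists>x\<in>Emb ` C. q \<bullet> \<psi> (Inv x) < r) \<and>
      (\<forall>x\<in>Emb ` C. q \<bullet> \<psi> (Inv x) < r \<longrightarrow> pred (Inv x) \<in> argmin_loss k L q)"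
    by blast
qed

lemma CC_admissible_imp_cart_surrogate:
  fixes L :: "nat \<Rightarrow> real^'n"
  assumes "CC_admissible k L d" "d \<le> CARD('m::finite)"
  obtains C :: "(real^'m) set" and \<psi> :: "real^'m \<Rightarrow> real^'n" and pred S
  where "\<forall>y. convex_on C (\<lambda>u. \<psi> u $ y)" "\<forall>u\<in>C. \<forall>y. 0 \<le> \<psi> u $ y"
    and "subspace S" "C \<subseteq> S" "dim S \<le> d" "threshold_calibrated k L C \<psi> pred"
proof -
  obtain C0 and \<psi>0 :: "(nat \<Rightarrow> real) \<Rightarrow> real^'n"
    where C0: "convex_set_in d C0" and \<psi>0: "convex_surrogate C0 \<psi>0" and cal: "calibrated k L C0 \<psi>0"
    using assms(1) unfolding CC_admissible_def by blast
  obtain pred where pred: "threshold_calibrated k L C0 \<psi>0 pred"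
    by (rule calibrated_imp_threshold_calibrated[OF cal])
  obtain Emb :: "(nat \<Rightarrow> real) \<Rightarrow> real^'m" and Inv S
    where inv: "\<And>u. \<forall>i\<ge>d. u i = 0 \<Longrightarrow> Inv (Emb u) = u"
      and lin: "\<And>a b u v. Emb (\<lambda>i. a * u i + b * v i) = a *\<^sub>R Emb u + b *\<^sub>R Emb v"
      and S: "subspace S" "dim S \<le> d" "\<And>u. Emb u \<in> S"
    by (rule cart_embedding_of_initial_segment[OF assms(2)]) (rule that)
  have inv_C0: "Inv (Emb u) = u" if "u \<in> C0" for u
    using inv C0 that unfolding convex_set_in_def by blast
  have "\<forall>y. convex_on (Emb ` C0) (\<lambda>x. \<psi>0 (Inv x) $ y)"
    using convex_on_embedded_surrogate[OF C0 \<psi>0 inv_C0 lin] by blast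
  moreover have "\<forall>x\<in>Emb ` C0. \<forall>y. 0 \<le> \<psi>0 (Inv x) $ y"
    using \<psi>0 inv_C0 unfolding convex_surrogate_def by force
  moreover have "Emb ` C0 \<subseteq> S" using S(3) by blast
  ultimately show thesis
    using that[OF _ _ S(1) _ S(2) threshold_calibrated_image[OF pred inv_C0]] by blast
qed

lemma affdim_le_of_CC_admissible:
  fixes L :: "nat \<Rightarrow> real^'n"
  assumes sums: "\<forall>t\<in>{1..k}. (\<Sum>y\<in>UNIV. L t $ y) = (\<Sum>y\<in>UNIV. L 1 $ y)"
    and adm: "CC_admissible k L d"
  shows "affdim k L \<le> int d"
proof (cases "CARD('n) \<le> d")
  case True
  have "affdim k L \<le> int DIM(real^'n)" unfolding affdim_def by (rule aff_dim_le_DIM)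
  thus ?thesis using True by simp
next
  case False
  then obtain C :: "(real^'n) set" and \<psi> :: "real^'n \<Rightarrow> real^'n" and pred S
    where "\<forall>y. convex_on C (\<lambda>u. \<psi> u $ y)" "\<forall>u\<in>C. \<forall>y. 0 \<le> \<psi> u $ y"
      and S: "subspace S" "C \<subseteq> S" "dim S \<le> d" and "threshold_calibrated k L C \<psi> pred"
    using CC_admissible_imp_cart_surrogate[OF adm, where 'm = 'n] by (metis nle_le)
  hence dim: "dim (span ((\<lambda>x. x - L 1) ` L ` {1..k})) \<le> d"
    using dim_column_differences_le[OF _ _ S(1,2) sums] S(3) by (meson order_trans)
  show ?thesis
  proof (cases "k = 0")
    case True
    thus ?thesis by (simp add: affdim_def)
  next
    case False
    thus ?thesis using affdim_eq_dim_column_differences[of k L] dim by simp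
  qed
qed

text \<open>The proof gives the stronger bound affdim L \<le> CCdim L.\<close>
theorem mainTheorem15:
  fixes k :: nat and L :: "nat \<Rightarrow> real^'n"
  assumes "loss_matrix k L"
    and "standing_assumption k L"
    and "\<forall>t1\<in>{1..k}. \<forall>t2\<in>{1..k}. \<exists>\<sigma>. \<sigma> permutes (UNIV :: 'n set) \<and>
            (\<forall>y. L t2 $ y = L t1 $ \<sigma> y)"
  shows "\<forall>d. CCdim k L = enat d \<longrightarrow> affdim k L - 1 \<le> int d"
  using affdim_le_of_CC_admissible[OF column_sums_eq_of_permuted_columns[OF assms(3)]]
    CCdim_eq_enat_imp_CC_admissible by fastforce

end
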